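(* Let $(Y_t,X_t)_{t\ge1}$ be a hidden Markov model with finite state space $S=\{1,\dots,K\}$, $K>1$, and let $T\ge 1$. Let $C_1,C_2,C_3,C_4\ge 0$ with $C_1>0$ and $C_4>0$. For $x^T\in\mathcal X^T$ and $s^T\in S^T$ define the combined risk $$\mathcal R(s^T\mid x^T):=C_1\bar R_1(s^T|x^T)+C_2\bar R_\infty(s^T|x^T)+C_3\bar R_1(s^T)+C_4\bar R_\infty(s^T)\in[0,\infty].$$ Then for almost every realization $(x^T,y^T)$ of $(X^T,Y^T)$ (with respect to its joint law), $\min_{s^T\in S^T}\mathcal R(s^T\mid x^T)<\infty$, and every minimizer $s^T$ of $\mathcal R(\cdot\mid x^T)$ is admissible, i.e. satisfies $p(s^T|x^T)>0$.
   Context: Hidden Markov model: $Y=(Y_t)_{t\ge1}$ is a (possibly time-inhomogeneous) Markov chain on $S$ with initial distribution $\pi_j=\mathbf P(Y_1=j)$ and transition probabilities $p_{ij}$; given $Y$, the observations $X_t$ (taking values in a measurable space $(\mathcal X,\mathcal B)$) are conditionally independent, and the conditional law of $X_t$ depends on $Y$ only through $Y_t$, with density $f_s$ (w.r.t. a reference measure $\lambda$) when $Y_t=s$. Notation: $p(s^T)=\mathbf P(Y^T=s^T)$; $p(x^T,s^T)=p(s^T)\prod_{t=1}^T f_{s_t}(x_t)$; $p(x^T)=\sum_{s^T}p(x^T,s^T)$; $p(s^T|x^T)=p(x^T,s^T)/p(x^T)$; $p_t(s)=\mathbf P(Y_t=s)$; $p_t(s|x^T)=\mathbf P(Y_t=s\mid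 X^T=x^T)$. Risks (with $\log 0=-\infty$): $\bar R_1(s^T|x^T)=-\frac1T\sum_{t=1}^T\log p_t(s_t|x^T)$; $\bar R_\infty(s^T|x^T)=-\frac1T\log p(s^T|x^T)$; $\bar R_1(s^T)=-\frac1T\sum_{t=1}^T\log p_t(s_t)$; $\bar R_\infty(s^T)=-\frac1T\log p(s^T)$. *)

theory Defs
  imports "HOL-Probability.Probability"
begin

text \<open>Hidden Markov model with state space S = {1..K}, time indices 1..T.
  pi0 j = P(Y_1 = j); Ptr t i j = P(Y_(t+1) = j | Y_t = i) (time-inhomogeneous);
  f j = density of X_t given Y_t = j w.r.t. the reference measure M (lambda).\<close>

definition hmm_seqs :: "nat \<Rightarrow> nat \<Rightarrow> (nat \<Rightarrow> nat) set" where
  "hmm_seqs K T = PiE {1..T} (\<lambda>_. {1..K})"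

definition hmm_ps :: "(nat \<Rightarrow> real) \<Rightarrow> (nat \<Rightarrow> nat \<Rightarrow> nat \<Rightarrow> real) \<Rightarrow> nat \<Rightarrow> (nat \<Rightarrow> nat) \<Rightarrow> real" where
  "hmm_ps pi0 Ptr T s = pi0 (s 1) * (\<Prod>t\<in>{1..<T}. Ptr t (s t) (s (Suc t)))"

definition hmm_pt :: "(nat \<Rightarrow> real) \<Rightarrow> (nat \<Rightarrow> nat \<Rightarrow> nat \<Rightarrow> real) \<Rightarrow> nat \<Rightarrow> nat \<Rightarrow> nat \<Rightarrow> nat \<Rightarrow> real" where
  "hmm_pt pi0 Ptr K T t j = (\<Sum>s\<in>{s\<in>hmm_seqs K T. s t = j}. hmm_ps pi0 Ptr T s)"

definition hmm_pxs :: "(nat \<Rightarrow> real) \<Rightarrow> (nat \<Rightarrow> nat \<Rightarrow> nat \<Rightarrow> real) \<Rightarrow> (nat \<Rightarrow> 'x \<Rightarrow> real) \<Rightarrow> nat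
    \<Rightarrow> (nat \<Rightarrow> 'x) \<Rightarrow> (nat \<Rightarrow> nat) \<Rightarrow> real" where
  "hmm_pxs pi0 Ptr f T x s = hmm_ps pi0 Ptr T s * (\<Prod>t\<in>{1..T}. f (s t) (x t))"

definition hmm_px :: "(nat \<Rightarrow> real) \<Rightarrow> (nat \<Rightarrow> nat \<Rightarrow> nat \<Rightarrow> real) \<Rightarrow> (nat \<Rightarrow> 'x \<Rightarrow> real) \<Rightarrow> nat \<Rightarrow> nat
    \<Rightarrow> (nat \<Rightarrow> 'x) \<Rightarrow> real" where
  "hmm_px pi0 Ptr f K T x = (\<Sum>s\<in>hmm_seqs K T. hmm_pxs pi0 Ptr f T x s)"

definition hmm_post :: "(nat \<Rightarrow> real) \<Rightarrow> (nat \<Rightarrow> nat \<Rightarrow> nat \<Rightarrow> real) \<Rightarrow> (nat \<Rightarrow> 'x \<Rightarrow> real) \<Rightarrow> nat \<Rightarrow> nat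
    \<Rightarrow> (nat \<Rightarrow> 'x) \<Rightarrow> (nat \<Rightarrow> nat) \<Rightarrow> real" where
  "hmm_post pi0 Ptr f K T x s = hmm_pxs pi0 Ptr f T x s / hmm_px pi0 Ptr f K T x"

definition hmm_ptx :: "(nat \<Rightarrow> real) \<Rightarrow> (nat \<Rightarrow> nat \<Rightarrow> nat \<Rightarrow> real) \<Rightarrow> (nat \<Rightarrow> 'x \<Rightarrow> real) \<Rightarrow> nat \<Rightarrow> nat
    \<Rightarrow> nat \<Rightarrow> nat \<Rightarrow> (nat \<Rightarrow> 'x) \<Rightarrow> real" where
  "hmm_ptx pi0 Ptr f K T t j x = (\<Sum>s\<in>{s\<in>hmm_seqs K T. s t = j}. hmm_post pi0 Ptr f K T x s)"

definition elog :: "real \<Rightarrow> ereal" where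
  "elog r = (if r > 0 then ereal (ln r) else -\<infinity>)"

definition risk1_cond where
  "risk1_cond pi0 Ptr f K T x s =
     - (ereal (1 / real T) * (\<Sum>t\<in>{1..T}. elog (hmm_ptx pi0 Ptr f K T t (s t) x)))"

definition riskinf_cond where
  "riskinf_cond pi0 Ptr f K T x s = - (ereal (1 / real T) * elog (hmm_post pi0 Ptr f K T x s))"

definition risk1 where
  "risk1 pi0 Ptr K T s = - (ereal (1 / real T) * (\<Sum>t\<in>{1..T}. elog (hmm_pt pi0 Ptr K T t (s t))))"

definition riskinf where
  "riskinf pi0 Ptr T s = - (ereal (1 / real T) * elog (hmm_ps pi0 Ptr T s))"

definition comb_risk :: "real \<Rightarrow> real \<Rightarrow> real \<Rightarrow> real \<Rightarrow> (nat \<Rightarrow> real) \<Rightarrow> (nat \<Rightarrow> nat \<Rightarrow> nat \<Rightarrow> real)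
    \<Rightarrow> (nat \<Rightarrow> 'x \<Rightarrow> real) \<Rightarrow> nat \<Rightarrow> nat \<Rightarrow> (nat \<Rightarrow> 'x) \<Rightarrow> (nat \<Rightarrow> nat) \<Rightarrow> ereal" where
  "comb_risk C1 C2 C3 C4 pi0 Ptr f K T x s =
     ereal C1 * risk1_cond pi0 Ptr f K T x s + ereal C2 * riskinf_cond pi0 Ptr f K T x s
     + ereal C3 * risk1 pi0 Ptr K T s + ereal C4 * riskinf pi0 Ptr T s"

text \<open>Joint law of (X^T, Y^T): density p(x^T,s^T) w.r.t. lambda^T \<otimes> counting measure.\<close>
definition hmm_joint :: "'x measure \<Rightarrow> (nat \<Rightarrow> real) \<Rightarrow> (nat \<Rightarrow> nat \<Rightarrow> nat \<Rightarrow> real) \<Rightarrow> (nat \<Rightarrow> 'x \<Rightarrow> real)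
    \<Rightarrow> nat \<Rightarrow> nat \<Rightarrow> ((nat \<Rightarrow> 'x) \<times> (nat \<Rightarrow> nat)) measure" where
  "hmm_joint M pi0 Ptr f K T =
     density (PiM {1..T} (\<lambda>_. M) \<Otimes>\<^sub>M count_space (hmm_seqs K T))
       (\<lambda>(x, s). ennreal (hmm_pxs pi0 Ptr f T x s))"

end

theory Submission
  imports Defs
begin

text \<open>Almost surely the observed \<open>x\<close> and hidden \<open>y\<close> satisfy \<open>p(x, y) > 0\<close>. Then \<open>y\<close> is
  admissible, so all four risks of \<open>y\<close> are finite and so is the minimum. A minimizer \<open>s\<close> thus has
  finite combined risk, and since \<open>C\<^sub>1, C\<^sub>4 > 0\<close> this means \<open>p\<^sub>t(s\<^sub>t|x) > 0\<close> for all \<open>t\<close> and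
  \<open>p(s) > 0\<close>. The former forces \<open>f\<^bsub>s\<^sub>t\<^esub>(x\<^sub>t) > 0\<close>, hence \<open>p(x, s) = p(s) \<Prod>\<^sub>t f\<^bsub>s\<^sub>t\<^esub>(x\<^sub>t) > 0\<close>.\<close>

lemma finite_hmm_seqs: "finite (hmm_seqs K T)"
  unfolding hmm_seqs_def by (auto intro: finite_PiE)

lemma hmm_seqs_range: "s \<in> hmm_seqs K T \<Longrightarrow> t \<in> {1..T} \<Longrightarrow> s t \<in> {1..K}"
  unfolding hmm_seqs_def by auto

lemma elog_pos: "r > 0 \<Longrightarrow> elog r = ereal (ln r)"
  unfolding elog_def by auto

lemma elog_neq_PInf: "elog r \<noteq> \<infinity>"
  unfolding elog_def by auto

lemma elog_eq_MInf_iff: "elog r = -\<infinity> \<longleftrightarrow> \<not> r > 0"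
  unfolding elog_def by auto

lemma sum_elog_neq_PInf: "finite A \<Longrightarrow> (\<Sum>t\<in>A. elog (g t)) \<noteq> \<infinity>"
  using elog_neq_PInf by (simp add: sum_Pinfty)

lemma sum_elog_eq_MInf_iff:
  assumes "finite A"
  shows "(\<Sum>t\<in>A. elog (g t)) = -\<infinity> \<longleftrightarrow> (\<exists>t\<in>A. \<not> g t > 0)"
  using assms
proof (induction A rule: finite_induct)
  case (insert a A)
  have "elog (g a) \<noteq> \<infinity>" "(\<Sum>t\<in>A. elog (g t)) \<noteq> \<infinity>"
    using elog_neq_PInf sum_elog_neq_PInf[OF insert.hyps(1)] by auto
  then have "elog (g a) + (\<Sum>t\<in>A. elog (g t)) = -\<infinity> \<longleftrightarrow>
      elog (g a) = -\<infinity> \<or> (\<Sum>t\<in>A. elog (g t)) = -\<infinity>"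
    by (cases "elog (g a)"; cases "\<Sum>t\<in>A. elog (g t)") auto
  with insert show ?case by (simp add: elog_eq_MInf_iff)
qed simp

text \<open>Each of the four risks has the shape \<open>-(1/T) e\<close> with \<open>e \<noteq> \<infinity>\<close>.\<close>

lemma neg_scaled_neq_MInf: "e \<noteq> \<infinity> \<Longrightarrow> - (ereal (1 / real T) * e) \<noteq> -\<infinity>"
  by (cases e) auto

lemma neg_scaled_eq_PInf_iff: "T \<ge> 1 \<Longrightarrow> - (ereal (1 / real T) * e) = \<infinity> \<longleftrightarrow> e = -\<infinity>"
  by (cases e) auto

lemma risk1_cond_eq_PInf_iff:
  "T \<ge> 1 \<Longrightarrow> risk1_cond pi0 Ptr f K T x s = \<infinity> \<longleftrightarrow>
     (\<exists>t\<in>{1..T}. \<not> hmm_ptx pi0 Ptr f K T t (s t) x > 0)"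
  unfolding risk1_cond_def by (simp add: neg_scaled_eq_PInf_iff sum_elog_eq_MInf_iff)

lemma riskinf_eq_PInf_iff:
  "T \<ge> 1 \<Longrightarrow> riskinf pi0 Ptr T s = \<infinity> \<longleftrightarrow> \<not> hmm_ps pi0 Ptr T s > 0"
  unfolding riskinf_def by (simp add: neg_scaled_eq_PInf_iff elog_eq_MInf_iff)

lemma ereal_weighted_sum4_finite_imp:
  fixes a b c d :: ereal
  assumes "C1 > 0" "C2 \<ge> 0" "C3 \<ge> 0" "C4 > 0"
    and "a \<noteq> -\<infinity>" "b \<noteq> -\<infinity>" "c \<noteq> -\<infinity>" "d \<noteq> -\<infinity>"
    and "ereal C1 * a + ereal C2 * b + ereal C3 * c + ereal C4 * d \<noteq> \<infinity>"
  shows "a \<noteq> \<infinity> \<and> d \<noteq> \<infinity>"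
  using assms by (cases a; cases b; cases c; cases d) (auto simp: ereal_mult_infty)

lemma comb_risk_finite_imp:
  assumes T: "T \<ge> 1" and C: "C1 > 0" "C2 \<ge> 0" "C3 \<ge> 0" "C4 > 0"
    and fin: "comb_risk C1 C2 C3 C4 pi0 Ptr f K T x s < \<infinity>"
  shows "\<forall>t\<in>{1..T}. hmm_ptx pi0 Ptr f K T t (s t) x > 0" and "hmm_ps pi0 Ptr T s > 0"
proof -
  have "risk1_cond pi0 Ptr f K T x s \<noteq> \<infinity> \<and> riskinf pi0 Ptr T s \<noteq> \<infinity>"
  proof (rule ereal_weighted_sum4_finite_imp[OF C])
    show "risk1_cond pi0 Ptr f K T x s \<noteq> -\<infinity>" "riskinf_cond pi0 Ptr f K T x s \<noteq> -\<infinity>"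
      "risk1 pi0 Ptr K T s \<noteq> -\<infinity>" "riskinf pi0 Ptr T s \<noteq> -\<infinity>"
      unfolding risk1_cond_def riskinf_cond_def risk1_def riskinf_def
      by (simp_all add: neg_scaled_neq_MInf sum_elog_neq_PInf elog_neq_PInf)
    show "ereal C1 * risk1_cond pi0 Ptr f K T x s + ereal C2 * riskinf_cond pi0 Ptr f K T x s
        + ereal C3 * risk1 pi0 Ptr K T s + ereal C4 * riskinf pi0 Ptr T s \<noteq> \<infinity>"
      using fin unfolding comb_risk_def by simp
  qed
  then show "\<forall>t\<in>{1..T}. hmm_ptx pi0 Ptr f K T t (s t) x > 0" "hmm_ps pi0 Ptr T s > 0"
    using T by (auto simp: risk1_cond_eq_PInf_iff riskinf_eq_PInf_iff)
qed

lemma comb_risk_finite_if: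
  assumes "\<forall>t\<in>{1..T}. hmm_ptx pi0 Ptr f K T t (s t) x > 0" "hmm_post pi0 Ptr f K T x s > 0"
    and "\<forall>t\<in>{1..T}. hmm_pt pi0 Ptr K T t (s t) > 0" "hmm_ps pi0 Ptr T s > 0"
  shows "comb_risk C1 C2 C3 C4 pi0 Ptr f K T x s < \<infinity>"
  using assms
  unfolding comb_risk_def risk1_cond_def riskinf_cond_def risk1_def riskinf_def
  by (simp add: elog_pos)

lemma hmm_ps_nonneg:
  assumes T: "T \<ge> 1" and pi_nn: "\<forall>j\<in>{1..K}. pi0 j \<ge> 0"
    and P_nn: "\<forall>t\<ge>1. \<forall>i\<in>{1..K}. \<forall>j\<in>{1..K}. Ptr t i j \<ge> 0"
    and s: "s \<in> hmm_seqs K T"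
  shows "hmm_ps pi0 Ptr T s \<ge> 0"
  using T pi_nn P_nn hmm_seqs_range[OF s] unfolding hmm_ps_def
  by (intro mult_nonneg_nonneg prod_nonneg) auto

lemma hmm_pxs_nonneg:
  assumes "T \<ge> 1" "\<forall>j\<in>{1..K}. pi0 j \<ge> 0" "\<forall>t\<ge>1. \<forall>i\<in>{1..K}. \<forall>j\<in>{1..K}. Ptr t i j \<ge> 0"
    and f_nn: "\<forall>j\<in>{1..K}. \<forall>t\<in>{1..T}. f j (x t) \<ge> 0"
    and s: "s \<in> hmm_seqs K T"
  shows "hmm_pxs pi0 Ptr f T x s \<ge> 0"
  using hmm_ps_nonneg[OF assms(1-3) s] f_nn hmm_seqs_range[OF s] unfolding hmm_pxs_def
  by (intro mult_nonneg_nonneg prod_nonneg) auto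

lemma hmm_pxs_pos:
  "hmm_ps pi0 Ptr T s > 0 \<Longrightarrow> \<forall>t\<in>{1..T}. f (s t) (x t) > 0 \<Longrightarrow> hmm_pxs pi0 Ptr f T x s > 0"
  unfolding hmm_pxs_def by (intro mult_pos_pos prod_pos) auto

lemma hmm_post_pos_iff:
  "hmm_px pi0 Ptr f K T x > 0 \<Longrightarrow> hmm_post pi0 Ptr f K T x s > 0 \<longleftrightarrow> hmm_pxs pi0 Ptr f T x s > 0"
  unfolding hmm_post_def by (simp add: zero_less_divide_iff)

text \<open>If \<open>f\<^sub>j(x\<^sub>t) = 0\<close>, every path \<open>s\<close> with \<open>s\<^sub>t = j\<close> has \<open>p(x, s) = 0\<close>.\<close>

lemma hmm_ptx_nonzero_imp_emission_nonzero:
  assumes t: "t \<in> {1..T}" and ptx: "hmm_ptx pi0 Ptr f K T t j x \<noteq> 0"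
  shows "f j (x t) \<noteq> 0"
proof -
  obtain s where "s t = j" "hmm_post pi0 Ptr f K T x s \<noteq> 0"
    using ptx sum.not_neutral_contains_not_neutral unfolding hmm_ptx_def by blast
  then have "(\<Prod>t\<in>{1..T}. f (s t) (x t)) \<noteq> 0" "s t = j"
    unfolding hmm_post_def hmm_pxs_def by auto
  with t show ?thesis by auto
qed

context
  fixes pi0 Ptr f K T x
  assumes T: "T \<ge> 1" and pi_nn: "\<forall>j\<in>{1..K}. pi0 j \<ge> 0"
    and P_nn: "\<forall>t\<ge>1. \<forall>i\<in>{1..K}. \<forall>j\<in>{1..K}. Ptr t i j \<ge> 0"
    and f_nn: "\<forall>j\<in>{1..K}. \<forall>t\<in>{1..T}. f j (x t) \<ge> 0"
    and px_pos: "hmm_px pi0 Ptr f K T x > 0"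
begin

lemma hmm_post_nonneg: "s \<in> hmm_seqs K T \<Longrightarrow> hmm_post pi0 Ptr f K T x s \<ge> 0"
  unfolding hmm_post_def using hmm_pxs_nonneg[where f=f and x=x, OF T pi_nn P_nn f_nn] px_pos
  by simp

lemma admissible_imp_marginals_pos:
  assumes s: "s \<in> hmm_seqs K T" and post: "hmm_post pi0 Ptr f K T x s > 0"
  shows "\<forall>t\<in>{1..T}. hmm_ptx pi0 Ptr f K T t (s t) x > 0"
    and "\<forall>t\<in>{1..T}. hmm_pt pi0 Ptr K T t (s t) > 0"
    and "hmm_ps pi0 Ptr T s > 0"
proof -
  have ps: "hmm_ps pi0 Ptr T s > 0"
    using post px_pos hmm_ps_nonneg[OF T pi_nn P_nn s]
    unfolding hmm_post_pos_iff[OF px_pos] hmm_pxs_def by (auto simp: zero_less_mult_iff)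
  have "hmm_post pi0 Ptr f K T x s \<le> hmm_ptx pi0 Ptr f K T t (s t) x" for t
    unfolding hmm_ptx_def using s hmm_post_nonneg finite_hmm_seqs by (intro member_le_sum) auto
  moreover have "hmm_ps pi0 Ptr T s \<le> hmm_pt pi0 Ptr K T t (s t)" for t
    unfolding hmm_pt_def using s hmm_ps_nonneg[OF T pi_nn P_nn] finite_hmm_seqs
    by (intro member_le_sum) auto
  ultimately show "\<forall>t\<in>{1..T}. hmm_ptx pi0 Ptr f K T t (s t) x > 0"
    "\<forall>t\<in>{1..T}. hmm_pt pi0 Ptr K T t (s t) > 0" "hmm_ps pi0 Ptr T s > 0"
    using post ps by (auto intro: less_le_trans)
qed

lemma comb_risk_finite_imp_admissible:
  assumes C: "C1 > 0" "C2 \<ge> 0" "C3 \<ge> 0" "C4 > 0"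
    and s: "s \<in> hmm_seqs K T" and fin: "comb_risk C1 C2 C3 C4 pi0 Ptr f K T x s < \<infinity>"
  shows "hmm_post pi0 Ptr f K T x s > 0"
proof -
  have "f (s t) (x t) > 0" if t: "t \<in> {1..T}" for t
  proof -
    have "hmm_ptx pi0 Ptr f K T t (s t) x > 0" using comb_risk_finite_imp(1)[OF T C fin] t ..
    then have "hmm_ptx pi0 Ptr f K T t (s t) x \<noteq> 0" by simp
    then have "f (s t) (x t) \<noteq> 0" by (rule hmm_ptx_nonzero_imp_emission_nonzero[OF t])
    with f_nn hmm_seqs_range[OF s t] t show ?thesis by force
  qed
  then show ?thesis
    using comb_risk_finite_imp(2)[OF T C fin] hmm_pxs_pos hmm_post_pos_iff[OF px_pos] by blast
qed

end

lemma comb_risk_minimizers_admissible: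
  assumes T: "T \<ge> 1" and pi_nn: "\<forall>j\<in>{1..K}. pi0 j \<ge> 0"
    and P_nn: "\<forall>t\<ge>1. \<forall>i\<in>{1..K}. \<forall>j\<in>{1..K}. Ptr t i j \<ge> 0"
    and f_nn: "\<forall>j\<in>{1..K}. \<forall>t\<in>{1..T}. f j (x t) \<ge> 0"
    and C: "C1 > 0" "C2 \<ge> 0" "C3 \<ge> 0" "C4 > 0"
    and pxy: "\<exists>y\<in>hmm_seqs K T. hmm_pxs pi0 Ptr f T x y > 0"
  shows "Min ((comb_risk C1 C2 C3 C4 pi0 Ptr f K T x) ` hmm_seqs K T) < \<infinity> \<and>
           (\<forall>s\<in>hmm_seqs K T.
              (\<forall>s'\<in>hmm_seqs K T. comb_risk C1 C2 C3 C4 pi0 Ptr f K T x s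
                                   \<le> comb_risk C1 C2 C3 C4 pi0 Ptr f K T x s')
              \<longrightarrow> hmm_post pi0 Ptr f K T x s > 0)"
proof -
  let ?R = "comb_risk C1 C2 C3 C4 pi0 Ptr f K T x"
  obtain y where y: "y \<in> hmm_seqs K T" and pxy: "hmm_pxs pi0 Ptr f T x y > 0" using pxy ..
  have px: "hmm_px pi0 Ptr f K T x > 0"
    using y hmm_pxs_nonneg[where f=f and x=x, OF T pi_nn P_nn f_nn] finite_hmm_seqs
    unfolding hmm_px_def by (intro less_le_trans[OF pxy] member_le_sum) auto
  note hmm = T pi_nn P_nn f_nn px
  have "hmm_post pi0 Ptr f K T x y > 0" using pxy hmm_post_pos_iff[OF px] by simp
  then have Ry: "?R y < \<infinity>"
    using admissible_imp_marginals_pos[OF hmm y] by (intro comb_risk_finite_if) auto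
  have "Min (?R ` hmm_seqs K T) \<le> ?R y" using y finite_hmm_seqs by simp
  moreover have "hmm_post pi0 Ptr f K T x s > 0"
    if "s \<in> hmm_seqs K T" "\<forall>s'\<in>hmm_seqs K T. ?R s \<le> ?R s'" for s
    using that y Ry by (intro comb_risk_finite_imp_admissible[OF hmm C]) (auto intro: le_less_trans)
  ultimately show ?thesis using Ry by (auto intro: le_less_trans)
qed

lemma measurable_hmm_pxs:
  assumes f_meas: "\<forall>j\<in>{1..K}. f j \<in> borel_measurable M"
  shows "(\<lambda>(x, s). ennreal (hmm_pxs pi0 Ptr f T x s))
           \<in> borel_measurable (PiM {1..T} (\<lambda>_. M) \<Otimes>\<^sub>M count_space (hmm_seqs K T))"
proof -
  have "(\<lambda>x. f (s t) (x t)) \<in> borel_measurable (PiM {1..T} (\<lambda>_. M))"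
    if s: "s \<in> hmm_seqs K T" and t: "t \<in> {1..T}" for s t
    using f_meas hmm_seqs_range[OF s t]
    by (intro measurable_compose[OF measurable_component_singleton[OF t]]) auto
  then have "(\<lambda>x. hmm_pxs pi0 Ptr f T x s) \<in> borel_measurable (PiM {1..T} (\<lambda>_. M))"
    if "s \<in> hmm_seqs K T" for s
    unfolding hmm_pxs_def using that by (simp add: borel_measurable_prod)
  then have "(\<lambda>z. ennreal (hmm_pxs pi0 Ptr f T (fst z) s))
      \<in> borel_measurable (PiM {1..T} (\<lambda>_. M) \<Otimes>\<^sub>M count_space (hmm_seqs K T))"
    if "s \<in> hmm_seqs K T" for s
    using that measurable_compose[OF measurable_fst] by simp
  then have "(\<lambda>z. ennreal (hmm_pxs pi0 Ptr f T (fst z) (snd z)))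
      \<in> borel_measurable (PiM {1..T} (\<lambda>_. M) \<Otimes>\<^sub>M count_space (hmm_seqs K T))"
    by (rule measurable_compose_countable'[OF _ measurable_snd countable_finite[OF finite_hmm_seqs]])
  then show ?thesis by (simp add: case_prod_beta)
qed

lemma AE_hmm_joint_pxs_pos:
  assumes "\<forall>j\<in>{1..K}. f j \<in> borel_measurable M"
  shows "AE z in hmm_joint M pi0 Ptr f K T.
           hmm_pxs pi0 Ptr f T (fst z) (snd z) > 0 \<and> snd z \<in> hmm_seqs K T
           \<and> (\<forall>t\<in>{1..T}. fst z t \<in> space M)"
  unfolding hmm_joint_def AE_density[OF measurable_hmm_pxs[OF assms]]
  by (intro AE_I2) (auto simp: space_pair_measure space_PiM)

theorem proposition1:
  fixes M :: "'x measure" and pi0 :: "nat \<Rightarrow> real" and Ptr :: "nat \<Rightarrow> nat \<Rightarrow> nat \<Rightarrow> real"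
    and f :: "nat \<Rightarrow> 'x \<Rightarrow> real" and K T :: nat and C1 C2 C3 C4 :: real
  assumes K: "K > 1" and T: "T \<ge> 1"
    and sf: "sigma_finite_measure M"
    and pi_nn: "\<forall>j\<in>{1..K}. pi0 j \<ge> 0" and pi_sum: "(\<Sum>j\<in>{1..K}. pi0 j) = 1"
    and P_nn: "\<forall>t\<ge>1. \<forall>i\<in>{1..K}. \<forall>j\<in>{1..K}. Ptr t i j \<ge> 0"
    and P_sum: "\<forall>t\<ge>1. \<forall>i\<in>{1..K}. (\<Sum>j\<in>{1..K}. Ptr t i j) = 1"
    and f_meas: "\<forall>j\<in>{1..K}. f j \<in> borel_measurable M"
    and f_nn: "\<forall>j\<in>{1..K}. \<forall>x\<in>space M. f j x \<ge> 0"
    and f_int: "\<forall>j\<in>{1..K}. (\<integral>\<^sup>+ x. ennreal (f j x) \<partial>M) = 1"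
    and C: "C1 > 0" "C2 \<ge> 0" "C3 \<ge> 0" "C4 > 0"
  shows "AE z in hmm_joint M pi0 Ptr f K T.
           Min ((comb_risk C1 C2 C3 C4 pi0 Ptr f K T (fst z)) ` hmm_seqs K T) < \<infinity> \<and>
           (\<forall>s\<in>hmm_seqs K T.
              (\<forall>s'\<in>hmm_seqs K T. comb_risk C1 C2 C3 C4 pi0 Ptr f K T (fst z) s
                                   \<le> comb_risk C1 C2 C3 C4 pi0 Ptr f K T (fst z) s')
              \<longrightarrow> hmm_post pi0 Ptr f K T (fst z) s > 0)"
  using AE_hmm_joint_pxs_pos[OF f_meas]
  by (rule eventually_mono, intro comb_risk_minimizers_admissible[OF T pi_nn P_nn _ C])
    (use f_nn in auto)

end
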